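(* Let $\theta\in(0,\pi/2]$ be a Pythagorean angle, i.e. $\cos\theta=s/r$ and $\sin\theta=t/r$ are both rational, with $r,s\in\mathbb{Z}$, $0\le|s|<r$, $\gcd(r,s)=1$. Then: (i) $\mathcal{N}_\theta=\mathbb{N}$; (ii) for every $n\in\mathcal{N}_\theta$ there are infinitely many distinct $\theta$-parallelogram envelopes for $n$; (iii) for every $n\in\mathcal{N}_\theta$ there are infinitely many rational numbers $m\ge1$ such that $n\in\mathcal{N}_{\theta,m}$.
   Context: A $\theta$-parallelogram envelope for a natural number $n$ is a quintuple of positive rationals $(a,b,c,d,e)$ with $a^2+b^2-\frac{2s}{r}ab=c^2$, $a^2+d^2+\frac{2s}{r}ad=e^2$, and $a(b+d)=rn$; $\mathcal{N}_\theta$ is the set of natural numbers admitting one. For a positive rational $m$, $\mathcal{N}_{\theta,m}$ is the set of natural numbers $n$ admitting such an envelope with additionally $d=mb$. *)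

theory Defs
  imports Complex_Main
begin

definition par_envelope :: "int \<Rightarrow> int \<Rightarrow> nat \<Rightarrow> rat \<times> rat \<times> rat \<times> rat \<times> rat \<Rightarrow> bool" where
  "par_envelope r s n q = (case q of (a, b, c, d, e) \<Rightarrow>
     a > 0 \<and> b > 0 \<and> c > 0 \<and> d > 0 \<and> e > 0 \<and>
     a^2 + b^2 - 2 * (of_int s / of_int r) * a * b = c^2 \<and>
     a^2 + d^2 + 2 * (of_int s / of_int r) * a * d = e^2 \<and>
     a * (b + d) = of_int r * of_nat n)"

definition N_theta :: "int \<Rightarrow> int \<Rightarrow> nat set" where
  "N_theta r s = {n. \<exists>q. par_envelope r s n q}"

definition N_theta_m :: "int \<Rightarrow> int \<Rightarrow> rat \<Rightarrow> nat set" where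
  "N_theta_m r s m = {n. \<exists>a b c d e. par_envelope r s n (a, b, c, d, e) \<and> d = m * b}"

end

theory Submission
  imports Defs
begin

(* Build the envelope around its height y = a sin \<theta>: with b = y (cot \<theta> + cot_double p)
   and d = y (cot_double m - cot \<theta>), the Pythagorean triple (2x, 1 - x^2, 1 + x^2) makes
   c and e rational. The area condition a (b + d) = r n then reads
   cot_double p + cot_double m = L S^2 with L = r n j^2 sin \<theta>, and curve_m, curve_p,
   curve_S solve this over the rationals for every L > 2. Along these solutions d/b < 3 and
   d/b tends to 3 as j grows, so infinitely many ratios d/b, hence infinitely many envelopes,
   occur. *)

lemma infinite_if_approaches_from_below:
  fixes c :: "'a::{linorder, no_bot}"
  assumes "\<And>z. z < c \<Longrightarrow> \<exists>x\<in>X. z < x \<and> x < c"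
  shows "infinite X"
proof
  assume "finite X"
  define B where "B = {x \<in> X. x < c}"
  have "finite B" using \<open>finite X\<close> by (simp add: B_def)
  obtain z where "z < c" using lt_ex by blast
  then have "B \<noteq> {}" using assms unfolding B_def by blast
  with \<open>finite B\<close> have "Max B \<in> B" by (rule Max_in)
  then obtain x where "x \<in> B" "Max B < x" using assms unfolding B_def by blast
  with \<open>finite B\<close> show False using Max_ge leD by blast
qed

lemma law_of_cosines_height:
  fixes \<kappa> \<sigma> y F :: "'a::field"
  assumes "\<kappa>^2 + \<sigma>^2 = 1" "\<sigma> \<noteq> 0"
  shows "(y/\<sigma>)^2 + (y*(F + \<kappa>/\<sigma>))^2 - 2*\<kappa>*(y/\<sigma>)*(y*(F + \<kappa>/\<sigma>)) = y^2*(1 + F^2)"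
proof -
  have "\<sigma>^2 * ((y/\<sigma>)^2 + (y*(F + \<kappa>/\<sigma>))^2 - 2*\<kappa>*(y/\<sigma>)*(y*(F + \<kappa>/\<sigma>)))
      = \<sigma>^2 * (y^2*(1 + F^2))"
    using assms by (simp add: field_simps power2_eq_square) algebra
  then show ?thesis using assms(2) by simp
qed

(* cot_double (tan \<phi>) = cot (2 \<phi>) *)
definition cot_double :: "rat \<Rightarrow> rat" where
  "cot_double x = (1 - x^2) / (2*x)"

lemma one_plus_cot_double_sq: "x \<noteq> 0 \<Longrightarrow> 1 + cot_double x ^ 2 = ((1 + x^2) / (2*x))^2"
  unfolding cot_double_def by (simp add: field_simps) algebra

lemma cot_double_eq: "x \<noteq> 0 \<Longrightarrow> cot_double x = 1/(2*x) - x/2"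
  unfolding cot_double_def by (simp add: field_simps power2_eq_square)

definition curve_m :: "rat \<Rightarrow> rat" where
  "curve_m L = 3 / (2*(L - 2))"

definition curve_p :: "rat \<Rightarrow> rat" where
  "curve_p L = 18*L*(L - 2)^2 / (2*L^2 - 2*L + 5)^2"

definition curve_S :: "rat \<Rightarrow> rat" where
  "curve_S L = (L + 1)*(8*L^3 - 36*L^2 + 66*L - 25) / (6*L*(L - 2)*(2*L^2 - 2*L + 5))"

lemma curve_denominator_pos: "2*L^2 - 2*L + 5 > (0::rat)"
proof -
  have "2*L^2 - 2*L + 5 = 2*(L - 1/2)^2 + 9/2" by (simp add: power2_eq_square algebra_simps)
  moreover have "(L - 1/2)^2 \<ge> 0" by simp
  ultimately show ?thesis by linarith
qed

lemma cot_double_curve_sum: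
  assumes "L > 2"
  shows "cot_double (curve_m L) + cot_double (curve_p L) = L * curve_S L ^ 2"
proof -
  define G where "G = 2*L^2 - 2*L + 5"
  have "G \<noteq> 0" "L \<noteq> 0" "L - 2 \<noteq> 0"
    using curve_denominator_pos[of L] assms by (auto simp: G_def)
  then show ?thesis
    unfolding cot_double_def curve_m_def curve_p_def curve_S_def G_def[symmetric]
    by (simp add: field_simps) (simp add: G_def, algebra)
qed

lemma cot_double_curve_m:
  assumes "L > 2"
  shows "cot_double (curve_m L) = (L - 2)/3 - 3/(4*(L - 2))"
proof -
  have "L - 2 \<noteq> 0" using assms by simp
  then show ?thesis unfolding cot_double_def curve_m_def
    by (simp add: field_simps) (simp add: power2_eq_square algebra_simps)
qed

lemma three_div_curve_p:
  assumes "L > 2"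
  shows "3 / (2 * curve_p L) = (L - 2)/3 + (16*L^3 - 24*L^2 + 12*L + 25) / (12*L*(L - 2)^2)"
proof -
  have "L \<noteq> 0" "L - 2 \<noteq> 0" "2*L^2 - 2*L + 5 \<noteq> 0"
    using assms curve_denominator_pos[of L] by auto
  then show ?thesis unfolding curve_p_def by (simp add: field_simps) algebra
qed

lemma curve_p_pos: "L > 2 \<Longrightarrow> curve_p L > 0"
  unfolding curve_p_def using curve_denominator_pos[of L] by simp

lemma curve_S_pos:
  assumes "L \<ge> 5"
  shows "curve_S L > 0"
proof -
  have "8*L^3 - 36*L^2 + 66*L - 25 = 4*L^2*(2*L - 9) + (66*L - 25)"
    by (simp add: algebra_simps power2_eq_square power3_eq_cube)
  moreover have "4*L^2*(2*L - 9) \<ge> 0" using assms by simp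
  ultimately have "8*L^3 - 36*L^2 + 66*L - 25 > 0" using assms by linarith
  then show ?thesis
    unfolding curve_S_def using assms curve_denominator_pos[of L] by simp
qed

lemma cot_double_curve_gap:
  assumes "L \<ge> 24"
  shows "0 < 3 * cot_double (curve_p L) - cot_double (curve_m L)"
    and "3 * cot_double (curve_p L) - cot_double (curve_m L) \<le> 2"
proof -
  define Q where "Q = 16*L^3 - 24*L^2 + 12*L + 25"
  define D where "D = 12*L*(L - 2)^2"
  have D: "D > 0" unfolding D_def using assms by simp
  have "Q - D = 4*L^3 + 12*L*(2*L - 3) + 25"
    unfolding Q_def D_def by (simp add: algebra_simps power2_eq_square power3_eq_cube)
  moreover have "4*L^3 + 12*L*(2*L - 3) \<ge> 0" using assms by simp
  ultimately have "D < Q" using assms by linarith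
  then have QD_lower: "1 < Q/D" using D by simp
  have "3*D - 2*Q = 4*L^2*(L - 24) + (120*L - 50)"
    unfolding Q_def D_def by (simp add: algebra_simps power2_eq_square power3_eq_cube)
  moreover have "4*L^2*(L - 24) \<ge> 0" using assms by simp
  ultimately have "2*Q \<le> 3*D" using assms by linarith
  then have QD_upper: "Q/D \<le> 3/2" using D by (simp add: field_simps)
  define p where "p = curve_p L"
  have p: "p > 0" unfolding p_def using curve_p_pos assms by simp
  have inv_p: "3/(2*p) = (L - 2)/3 + Q/D"
    unfolding p_def Q_def D_def using three_div_curve_p assms by simp
  have "(L - 2)/3 \<ge> 22/3" using assms by simp
  then have "3/(2*p) > 8" using inv_p QD_lower by linarith
  then have "p < 3/16" using p by (simp add: field_simps)
  have "3 * cot_double p = 3/(2*p) - 3*p/2" using cot_double_eq[of p] p by simp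
  moreover have "cot_double (curve_m L) = (L - 2)/3 - 3/(4*(L - 2))"
    using cot_double_curve_m assms by simp
  moreover have "0 < 3/(4*(L - 2))" "3/(4*(L - 2)) \<le> 1/2" using assms by (simp_all add: field_simps)
  ultimately show "0 < 3 * cot_double (curve_p L) - cot_double (curve_m L)"
    and "3 * cot_double (curve_p L) - cot_double (curve_m L) \<le> 2"
    unfolding p_def[symmetric] using inv_p QD_lower QD_upper p \<open>p < 3/16\<close> by linarith+
qed

lemma par_envelope_of_height:
  fixes \<kappa> \<sigma> y p m :: rat
  assumes cos: "of_int s / of_int r = \<kappa>" and pyth: "\<kappa>^2 + \<sigma>^2 = 1" and \<sigma>: "\<sigma> > 0"
    and y: "y > 0" and p: "p > 0" and m: "m > 0"
    and b: "cot_double p + \<kappa>/\<sigma> > 0" and d: "cot_double m - \<kappa>/\<sigma> > 0"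
    and area: "y^2 * (cot_double p + cot_double m) = of_int r * \<sigma> * of_nat n"
  shows "par_envelope r s n (y/\<sigma>, y*(cot_double p + \<kappa>/\<sigma>), y*(1 + p^2)/(2*p),
                             y*(cot_double m - \<kappa>/\<sigma>), y*(1 + m^2)/(2*m))"
proof -
  have hyp: "(y*(1 + x^2)/(2*x))^2 = y^2*(1 + cot_double x ^ 2)" if "x > 0" for x
    using one_plus_cot_double_sq[of x] that by (simp add: power_mult_distrib power_divide)
  have "(y/\<sigma>)^2 + (y*(cot_double m - \<kappa>/\<sigma>))^2 + 2*\<kappa>*(y/\<sigma>)*(y*(cot_double m - \<kappa>/\<sigma>))
      = y^2*(1 + cot_double m ^ 2)"
    using law_of_cosines_height[of "-\<kappa>" \<sigma> y "cot_double m"] pyth \<sigma> by simp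
  moreover have "(y/\<sigma>)^2 + (y*(cot_double p + \<kappa>/\<sigma>))^2 - 2*\<kappa>*(y/\<sigma>)*(y*(cot_double p + \<kappa>/\<sigma>))
      = y^2*(1 + cot_double p ^ 2)"
    using law_of_cosines_height[of \<kappa> \<sigma> y "cot_double p"] pyth \<sigma> by simp
  moreover have "y/\<sigma> * (y*(cot_double p + \<kappa>/\<sigma>) + y*(cot_double m - \<kappa>/\<sigma>))
      = y^2 * (cot_double p + cot_double m) / \<sigma>"
    by (simp add: algebra_simps add_divide_distrib power2_eq_square)
  moreover have "\<dots> = of_int r * of_nat n" using area \<sigma> by simp
  ultimately show ?thesis
    unfolding par_envelope_def cos using hyp p m y \<sigma> b d by (simp add: add_pos_nonneg)
qed

lemma par_envelope_at_scale:
  fixes \<kappa> \<sigma> L :: rat and j :: nat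
  assumes cos: "of_int s / of_int r = \<kappa>" "\<kappa> \<ge> 0" "\<kappa>^2 + \<sigma>^2 = 1" "\<sigma> > 0"
    and j: "j > 0"
    and L: "L = of_int r * \<sigma> * of_nat n * of_nat j ^ 2" "L \<ge> 24" "L \<ge> 3*(\<kappa>/\<sigma>) + 4"
  shows "\<exists>a b c d e. par_envelope r s n (a, b, c, d, e)
           \<and> 3 - 36*(1 + 2*(\<kappa>/\<sigma>))/L < d/b \<and> d/b < 3"
proof -
  define k where "k = \<kappa>/\<sigma>"
  define Fp where "Fp = cot_double (curve_p L)"
  define Fm where "Fm = cot_double (curve_m L)"
  define y where "y = 1 / (of_nat j * curve_S L)"
  have k: "k \<ge> 0" unfolding k_def using cos by simp
  have gap: "0 < 3*Fp - Fm" "3*Fp - Fm \<le> 2"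
    unfolding Fp_def Fm_def using cot_double_curve_gap L(2) by auto
  have "Fm = (L - 2)/3 - 3/(4*(L - 2))" unfolding Fm_def using cot_double_curve_m L(2) by simp
  moreover have "3/(4*(L - 2)) \<le> 1/2" using L(2) by (simp add: field_simps)
  ultimately have Fm: "Fm \<ge> L/3 - 7/6" by (simp add: diff_divide_distrib)
  then have Fmk: "Fm - k > 0" using L(3) unfolding k_def by linarith
  have Fpk: "Fp + k > L/18" using Fm gap k L(2) by linarith
  then have Fpk0: "Fp + k > 0" using L(2) by linarith
  have p: "curve_p L > 0" using curve_p_pos L(2) by simp
  have m: "curve_m L > 0" unfolding curve_m_def using L(2) by simp
  have S: "curve_S L > 0" using curve_S_pos L(2) by simp
  then have y: "y > 0" unfolding y_def using j by simp
  have "y^2 * (Fp + Fm) = L / of_nat j ^ 2"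
    unfolding y_def Fp_def Fm_def using cot_double_curve_sum[of L] L(2) S
    by (simp add: add.commute power_mult_distrib power_divide)
  also have "\<dots> = of_int r * \<sigma> * of_nat n" using L(1) j by simp
  finally have env: "par_envelope r s n (y/\<sigma>, y*(Fp + k), y*(1 + curve_p L ^ 2)/(2*curve_p L),
                                     y*(Fm - k), y*(1 + curve_m L ^ 2)/(2*curve_m L))"
    using par_envelope_of_height[OF cos(1,3,4) y p m, folded Fp_def Fm_def k_def] Fpk0 Fmk
    by simp
  have "y*(Fm - k) / (y*(Fp + k)) = (Fm - k)/(Fp + k)" using y by simp
  also have "\<dots> = 3 - (3*Fp - Fm + 4*k)/(Fp + k)" using Fpk0 by (simp add: field_simps)
  finally have ratio: "y*(Fm - k) / (y*(Fp + k)) = 3 - (3*Fp - Fm + 4*k)/(Fp + k)" .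
  have "0 < (3*Fp - Fm + 4*k)/(Fp + k)" using gap k Fpk0 by simp
  moreover have "(3*Fp - Fm + 4*k)/(Fp + k) < (2 + 4*k)/(L/18)"
    using gap k Fpk L(2) by (intro frac_less2) auto
  moreover have "(2 + 4*k)/(L/18) = 36*(1 + 2*k)/L" by (simp add: field_simps)
  ultimately have "3 - 36*(1 + 2*k)/L < y*(Fm - k) / (y*(Fp + k))"
    and "y*(Fm - k) / (y*(Fp + k)) < 3"
    unfolding ratio by linarith+
  with env show ?thesis unfolding k_def[symmetric] by blast
qed

lemma par_envelope_ratio_approaches_3:
  fixes \<kappa> \<sigma> z :: rat
  assumes cos: "of_int s / of_int r = \<kappa>" "\<kappa> \<ge> 0" "\<kappa>^2 + \<sigma>^2 = 1" "\<sigma> > 0"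
    and "r > 0" "n \<ge> 1" "z < 3"
  shows "\<exists>a b c d e. par_envelope r s n (a, b, c, d, e) \<and> z < d/b \<and> d/b < 3"
proof -
  define k where "k = \<kappa>/\<sigma>"
  define M where "M = max 24 (max (3*k + 4) (36*(1 + 2*k)/(3 - z)))"
  define P where "P = of_int r * \<sigma> * of_nat n"
  have "P > 0" unfolding P_def using assms by simp
  then obtain j :: nat where j: "M < of_nat j * P"
    using ex_less_of_nat_mult by blast
  define L where "L = P * of_nat j ^ 2"
  have "j > 0" using j unfolding M_def by (cases j) auto
  then have "of_nat j * P \<le> L"
    unfolding L_def power2_eq_square using \<open>P > 0\<close> by (simp add: mult_le_cancel_left1 ac_simps)
  then have L: "L \<ge> 24" "L \<ge> 3*k + 4" "36*(1 + 2*k)/(3 - z) < L"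
    using j unfolding M_def by auto
  then have "36*(1 + 2*k)/L < 3 - z" using \<open>z < 3\<close> by (simp add: field_simps)
  then show ?thesis
    using par_envelope_at_scale[OF cos \<open>j > 0\<close> L_def[unfolded P_def] L(1) L(2)[unfolded k_def]]
    unfolding k_def by fastforce
qed

lemma N_theta_m_of_par_envelope:
  assumes "par_envelope r s n (a, b, c, d, e)"
  shows "n \<in> N_theta_m r s (d/b)"
proof -
  have "d = d/b * b" using assms unfolding par_envelope_def by simp
  then show ?thesis unfolding N_theta_m_def using assms by blast
qed

lemma par_envelope_imp_ge_1:
  assumes "par_envelope r s n (a, b, c, d, e)"
  shows "n \<ge> 1"
proof -
  have "a > 0" "b + d > 0" "a * (b + d) = of_int r * of_nat n"
    using assms unfolding par_envelope_def by auto
  then have "of_int r * of_nat n \<noteq> (0::rat)" by (metis mult_pos_pos less_irrefl)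
  then show ?thesis by (simp add: Suc_le_eq)
qed

theorem theorem6p4:
  fixes \<theta> :: real and r s :: int
  assumes "0 < \<theta>" "\<theta> \<le> pi / 2"
    and "0 \<le> \<bar>s\<bar>" "\<bar>s\<bar> < r" "gcd r s = 1"
    and "cos \<theta> = of_int s / of_int r"
    and "sin \<theta> \<in> \<rat>"
  shows "N_theta r s = {n. n \<ge> 1}
    \<and> (\<forall>n \<in> N_theta r s. infinite {q. par_envelope r s n q})
    \<and> (\<forall>n \<in> N_theta r s. infinite {m :: rat. m \<ge> 1 \<and> n \<in> N_theta_m r s m})"
proof -
  have r: "r > 0" using assms(4) by simp
  obtain \<sigma> where \<sigma>: "sin \<theta> = of_rat \<sigma>" using assms(7) Rats_cases by blast
  define \<kappa> where "\<kappa> = (of_int s / of_int r :: rat)"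
  have cos: "cos \<theta> = of_rat \<kappa>" unfolding \<kappa>_def assms(6) by (simp add: of_rat_divide)
  have "0 < sin \<theta>" using assms(1,2) by (intro sin_gt_zero) (use pi_gt_zero in linarith)+
  moreover have "0 \<le> cos \<theta>" using assms(1,2) by (intro cos_ge_zero) linarith+
  moreover have "of_rat (\<kappa>^2 + \<sigma>^2) = (1::real)"
    unfolding of_rat_add of_rat_power \<sigma>[symmetric] cos[symmetric] by simp
  ultimately have "\<sigma> > 0" "\<kappa> \<ge> 0" "\<kappa>^2 + \<sigma>^2 = 1"
    unfolding \<sigma> cos by simp_all
  note approach = par_envelope_ratio_approaches_3[OF \<kappa>_def[symmetric] \<open>\<kappa> \<ge> 0\<close>
      \<open>\<kappa>^2 + \<sigma>^2 = 1\<close> \<open>\<sigma> > 0\<close> r]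
  have N: "N_theta r s = {n. n \<ge> 1}"
    unfolding N_theta_def using approach[of _ 0] par_envelope_imp_ge_1
    by (fastforce simp: split_paired_Ex)
  have "infinite ((\<lambda>(a, b, c, d, e). d/b) ` {q. par_envelope r s n q})" if "n \<ge> 1" for n
    by (rule infinite_if_approaches_from_below[of 3]) (use approach[OF that] in force)
  moreover have "infinite {m :: rat. m \<ge> 1 \<and> n \<in> N_theta_m r s m}" if n: "n \<ge> 1" for n
  proof (rule infinite_if_approaches_from_below[of 3])
    fix z :: rat assume "z < 3"
    with approach[OF n, of "max z 1"] N_theta_m_of_par_envelope
    show "\<exists>m\<in>{m. m \<ge> 1 \<and> n \<in> N_theta_m r s m}. z < m \<and> m < 3" by fastforce
  qed
  ultimately show ?thesis using N finite_imageI by auto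
qed

end
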